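(* Let $\alpha\neq0$, let $m$ be a positive integer and $u\in\{0,1,\dots,m\}$. Then $$\Lambda'(u|\mu)\,\Lambda'(u-1|\mu)\cdots\Lambda'(u-m+1|\mu)=(-\alpha)^{-m}\,\Delta_-^{u}\,(\mu_2-\mu_1z)^m\,\Delta_-^{m-u}$$ as operators on $\mathbb{C}[\mu_1,\mu_2][z]$.
   Context: $\mu_1,\mu_2$ are commuting indeterminates, commuting with $z$ and with $\Delta_\pm$; $z$ acts by multiplication; $[\Delta_\pm f](z)=\tfrac12\big(f(z+\alpha)\pm f(z-\alpha)\big)$ (acting in the variable $z$). For $u\in\mathbb{C}$, $\Lambda'(u|\mu)=-\alpha^{-1}\big[(\mu_2-\mu_1z)\Delta_--\alpha u\,\mu_1\Delta_+\big]$. *)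

theory Defs
  imports Complex_Main "HOL-Computational_Algebra.Polynomial"
begin

text \<open>Coefficient ring C[mu1,mu2], realised as nested univariate polynomials:
  the outer variable is mu2, the inner one mu1. Operators act on Rpoly = C[mu1,mu2][z].\<close>

type_synonym R = "complex poly poly"

definition cst :: "complex \<Rightarrow> R" where
  "cst a = [:[:a:]:]"

definition mu1 :: R where
  "mu1 = [:[:0, 1:]:]"

definition mu2 :: R where
  "mu2 = [:0, 1:]"

definition zshift :: "complex \<Rightarrow> R poly \<Rightarrow> R poly" where
  "zshift a f = pcompose f [:cst a, 1:]"

definition Dminus :: "complex \<Rightarrow> R poly \<Rightarrow> R poly" where
  "Dminus \<alpha> f = smult (cst (1/2)) (zshift \<alpha> f - zshift (-\<alpha>) f)"

definition Dplus :: "complex \<Rightarrow> R poly \<Rightarrow> R poly" where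
  "Dplus \<alpha> f = smult (cst (1/2)) (zshift \<alpha> f + zshift (-\<alpha>) f)"

definition Lambda' :: "complex \<Rightarrow> complex \<Rightarrow> R poly \<Rightarrow> R poly" where
  "Lambda' \<alpha> u f = smult (cst (- inverse \<alpha>))
      ([:mu2, - mu1:] * Dminus \<alpha> f - smult (cst (\<alpha> * u) * mu1) (Dplus \<alpha> f))"

fun LamProd :: "complex \<Rightarrow> complex \<Rightarrow> nat \<Rightarrow> R poly \<Rightarrow> R poly" where
  "LamProd \<alpha> u 0 = id"
| "LamProd \<alpha> u (Suc k) = Lambda' \<alpha> u \<circ> LamProd \<alpha> (u - 1) k"

end

theory Submission
  imports Defs
begin

text \<open>Write \<open>D\<close> for \<open>\<Delta>\<^sub>-\<close> and \<open>w = \<mu>\<^sub>2 - \<mu>\<^sub>1 z\<close>. Since \<open>w(z \<pm> \<alpha>) = w \<mp> \<alpha>\<mu>\<^sub>1\<close>, the operator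
  \<open>D\<close> satisfies the twisted Leibniz rule
  \<open>D\<^sup>n (w h) = w D\<^sup>n h - n\<alpha>\<mu>\<^sub>1 \<Delta>\<^sub>+ D\<^sup>n\<^sup>-\<^sup>1 h\<close>, and \<open>\<Delta>\<^sub>+\<close> commutes with \<open>D\<close>.
  Comparing with \<open>-\<alpha>\<Lambda>'(c) = w D - c\<alpha>\<mu>\<^sub>1 \<Delta>\<^sub>+\<close> gives two intertwining relations:
  \<open>\<Lambda>'(n+1) D\<^sup>n = (-\<alpha>)\<^sup>-\<^sup>1 D\<^sup>n\<^sup>+\<^sup>1 w\<close> and \<open>D\<^sup>d \<Lambda>'(-d) = (-\<alpha>)\<^sup>-\<^sup>1 w D\<^sup>d\<^sup>+\<^sup>1\<close>.
  The first, applied \<open>u\<close> times from the left, evaluates the product \<open>\<Lambda>'(u) \<dots> \<Lambda>'(1)\<close>;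
  the second then pushes the remaining factors \<open>\<Lambda>'(0), \<Lambda>'(-1), \<dots>\<close> through \<open>D\<^sup>u\<close>
  one at a time.\<close>

abbreviation mu_z :: "R poly" where
  "mu_z \<equiv> [:mu2, - mu1:]"

lemma cst_add: "cst a + cst b = cst (a + b)"
  by (simp add: cst_def)

lemma cst_mult: "cst a * cst b = cst (a * b)"
  by (simp add: cst_def)

lemma cst_uminus: "cst (- a) = - cst a"
  by (simp add: cst_def)

lemma cst_0 [simp]: "cst 0 = 0"
  by (simp add: cst_def)

lemma cst_1 [simp]: "cst 1 = 1"
  by (simp add: cst_def one_pCons)

lemma zshift_add: "zshift a (f + g) = zshift a f + zshift a g"
  by (simp add: zshift_def pcompose_add)

lemma zshift_diff: "zshift a (f - g) = zshift a f - zshift a g"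
  by (simp add: zshift_def pcompose_diff)

lemma zshift_smult: "zshift a (smult c f) = smult c (zshift a f)"
  by (simp add: zshift_def pcompose_smult)

lemma zshift_mult: "zshift a (f * g) = zshift a f * zshift a g"
  by (simp add: zshift_def pcompose_mult)

lemma zshift_zshift: "zshift a (zshift b f) = zshift (a + b) f"
proof -
  have "pcompose [:cst b, 1:] [:cst a, 1:] = [:cst (a + b), 1:]"
    by (simp add: pcompose_pCons cst_add[symmetric] algebra_simps)
  then show ?thesis
    unfolding zshift_def by (simp add: pcompose_assoc[symmetric])
qed

lemma zshift_mu_z: "zshift a mu_z = mu_z - [:cst a * mu1:]"
  by (simp add: zshift_def pcompose_pCons algebra_simps)

lemma zshift_mult_mu_z:
  "zshift a (mu_z * h) = mu_z * zshift a h - smult (cst a * mu1) (zshift a h)"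
proof -
  have "[:cst a * mu1:] * zshift a h = smult (cst a * mu1) (zshift a h)"
    by simp
  then show ?thesis
    by (simp only: zshift_mult zshift_mu_z left_diff_distrib)
qed

lemma Dminus_diff: "Dminus \<alpha> (f - g) = Dminus \<alpha> f - Dminus \<alpha> g"
  unfolding Dminus_def by (simp add: zshift_diff smult_add_right smult_diff_right algebra_simps)

lemma Dminus_smult: "Dminus \<alpha> (smult c f) = smult c (Dminus \<alpha> f)"
  unfolding Dminus_def by (simp add: zshift_smult smult_diff_right mult.commute)

lemma Dplus_smult: "Dplus \<alpha> (smult c f) = smult c (Dplus \<alpha> f)"
  unfolding Dplus_def by (simp add: zshift_smult smult_add_right mult.commute)

lemma Dminus_Dplus_commute: "Dminus \<alpha> (Dplus \<alpha> f) = Dplus \<alpha> (Dminus \<alpha> f)"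
  unfolding Dminus_def Dplus_def
  by (simp add: zshift_smult zshift_add zshift_diff zshift_zshift
      smult_add_right smult_diff_right algebra_simps)

lemma Dminus_mult_mu_z:
  "Dminus \<alpha> (mu_z * h) = mu_z * Dminus \<alpha> h - smult (cst \<alpha> * mu1) (Dplus \<alpha> h)"
  unfolding Dminus_def Dplus_def zshift_mult_mu_z cst_uminus mult_minus_left
  by (simp add: algebra_simps smult_add_right smult_diff_right del: mult_pCons_left)

lemma funpow_commute:
  assumes "\<And>x. f (g x) = g (f x)"
  shows "(f ^^ n) (g x) = g ((f ^^ n) x)"
  by (induction n) (simp_all add: assms)

lemma Dminus_power_smult: "(Dminus \<alpha> ^^ n) (smult c f) = smult c ((Dminus \<alpha> ^^ n) f)"
  by (rule funpow_commute) (rule Dminus_smult)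

lemma Dminus_power_Dplus: "(Dminus \<alpha> ^^ n) (Dplus \<alpha> f) = Dplus \<alpha> ((Dminus \<alpha> ^^ n) f)"
  by (rule funpow_commute) (rule Dminus_Dplus_commute)

lemma Dminus_power_diff:
  "(Dminus \<alpha> ^^ n) (f - g) = (Dminus \<alpha> ^^ n) f - (Dminus \<alpha> ^^ n) g"
  by (induction n) (simp_all add: Dminus_diff)

lemma Dminus_power_mult_mu_z:
  "(Dminus \<alpha> ^^ Suc n) (mu_z * h) = mu_z * (Dminus \<alpha> ^^ Suc n) h
     - smult (cst (of_nat (Suc n) * \<alpha>) * mu1) (Dplus \<alpha> ((Dminus \<alpha> ^^ n) h))"
proof (induction n)
  case 0
  then show ?case by (simp add: Dminus_mult_mu_z del: mult_pCons_left)
next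
  case (Suc n)
  let ?P = "Dplus \<alpha> ((Dminus \<alpha> ^^ Suc n) h)"
  have split: "cst (of_nat (Suc (Suc n)) * \<alpha>) * mu1 = cst \<alpha> * mu1 + cst (of_nat (Suc n) * \<alpha>) * mu1"
  proof -
    have "of_nat (Suc (Suc n)) * \<alpha> = \<alpha> + of_nat (Suc n) * \<alpha>"
      by (simp add: algebra_simps)
    then show ?thesis
      by (simp only: cst_add[symmetric] distrib_right)
  qed
  have "(Dminus \<alpha> ^^ Suc (Suc n)) (mu_z * h) = Dminus \<alpha> ((Dminus \<alpha> ^^ Suc n) (mu_z * h))"
    by simp
  also have "\<dots> = Dminus \<alpha> (mu_z * (Dminus \<alpha> ^^ Suc n) h) - smult (cst (of_nat (Suc n) * \<alpha>) * mu1) ?P"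
    by (subst Suc.IH) (simp only: Dminus_diff Dminus_smult Dminus_Dplus_commute funpow.simps comp_apply)
  also have "\<dots> = mu_z * (Dminus \<alpha> ^^ Suc (Suc n)) h - smult (cst \<alpha> * mu1) ?P
      - smult (cst (of_nat (Suc n) * \<alpha>) * mu1) ?P"
    by (simp only: Dminus_mult_mu_z funpow.simps comp_apply)
  also have "\<dots> = mu_z * (Dminus \<alpha> ^^ Suc (Suc n)) h
      - smult (cst (of_nat (Suc (Suc n)) * \<alpha>) * mu1) ?P"
    by (simp only: split smult_add_left diff_diff_eq)
  finally show ?case .
qed

lemma Lambda'_smult: "Lambda' \<alpha> c (smult a f) = smult a (Lambda' \<alpha> c f)"
  unfolding Lambda'_def Dminus_smult Dplus_smult
  by (simp only: mult_smult_right mult_smult_left smult_diff_right smult_smult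
      mult.commute mult.left_commute)

lemma Lambda'_Dminus_power:
  "Lambda' \<alpha> (of_nat (Suc n)) ((Dminus \<alpha> ^^ n) h)
     = smult (cst (- inverse \<alpha>)) ((Dminus \<alpha> ^^ Suc n) (mu_z * h))"
  unfolding Lambda'_def Dminus_power_mult_mu_z
  by (simp add: mult.commute del: mult_pCons_left)

lemma Dminus_power_Lambda':
  "(Dminus \<alpha> ^^ n) (Lambda' \<alpha> (- of_nat n) f)
     = smult (cst (- inverse \<alpha>)) (mu_z * (Dminus \<alpha> ^^ Suc n) f)"
proof (cases n)
  case 0
  then show ?thesis by (simp add: Lambda'_def del: mult_pCons_left)
next
  case (Suc k)
  have coeff: "cst (\<alpha> * - of_nat (Suc k)) * mu1 = - (cst (of_nat (Suc k) * \<alpha>) * mu1)"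
  proof -
    have "\<alpha> * - of_nat (Suc k) = - (of_nat (Suc k) * \<alpha>)"
      by (simp add: algebra_simps)
    then show ?thesis
      by (simp only: cst_uminus mult_minus_left)
  qed
  show ?thesis
    unfolding Lambda'_def Dminus_power_smult Dminus_power_diff Suc
      Dminus_power_mult_mu_z Dminus_power_Dplus coeff
    by (simp add: funpow_swap1[symmetric] del: mult_pCons_left)
qed

lemma LamProd_Suc_right:
  "LamProd \<alpha> c (Suc k) = LamProd \<alpha> c k \<circ> Lambda' \<alpha> (c - of_nat k)"
proof (induction k arbitrary: c)
  case 0
  then show ?case by simp
next
  case (Suc k)
  have "LamProd \<alpha> c (Suc (Suc k)) = Lambda' \<alpha> c \<circ> (LamProd \<alpha> (c - 1) k \<circ> Lambda' \<alpha> (c - 1 - of_nat k))"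
    by (simp only: LamProd.simps(2)[of _ _ "Suc k"] Suc.IH)
  also have "c - 1 - of_nat k = c - of_nat (Suc k)"
    by (simp add: algebra_simps)
  finally show ?case
    by (simp add: comp_assoc)
qed

lemma cst_inverse_power_step:
  "cst (inverse ((- \<alpha>) ^ n)) * cst (- inverse \<alpha>) = cst (inverse ((- \<alpha>) ^ Suc n))"
  by (simp add: cst_mult mult.commute)

lemma LamProd_diagonal:
  "LamProd \<alpha> (of_nat n) n f = smult (cst (inverse ((- \<alpha>) ^ n))) ((Dminus \<alpha> ^^ n) (mu_z ^ n * f))"
proof (induction n arbitrary: f)
  case 0
  then show ?case by simp
next
  case (Suc n)
  have "LamProd \<alpha> (of_nat (Suc n)) (Suc n) f
      = smult (cst (inverse ((- \<alpha>) ^ n)))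
          (Lambda' \<alpha> (of_nat (Suc n)) ((Dminus \<alpha> ^^ n) (mu_z ^ n * f)))"
    by (simp add: Suc.IH Lambda'_smult)
  also have "\<dots> = smult (cst (inverse ((- \<alpha>) ^ Suc n)))
      ((Dminus \<alpha> ^^ Suc n) (mu_z * (mu_z ^ n * f)))"
    by (simp only: Lambda'_Dminus_power smult_smult cst_inverse_power_step)
  finally show ?case
    by (simp add: mult.assoc del: mult_pCons_left)
qed

lemma LamProd_eq_Dminus_power:
  "LamProd \<alpha> (of_nat u) (u + d) f
     = smult (cst (inverse ((- \<alpha>) ^ (u + d))))
         ((Dminus \<alpha> ^^ u) (mu_z ^ (u + d) * (Dminus \<alpha> ^^ d) f))"
proof (induction d arbitrary: f)
  case 0
  then show ?case by (simp add: LamProd_diagonal)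
next
  case (Suc d)
  have shift: "of_nat u - of_nat (u + d) = - (of_nat d :: complex)"
    by simp
  have "LamProd \<alpha> (of_nat u) (u + Suc d) f = LamProd \<alpha> (of_nat u) (u + d) (Lambda' \<alpha> (- of_nat d) f)"
    by (simp only: add_Suc_right LamProd_Suc_right shift comp_apply)
  also have "\<dots> = smult (cst (inverse ((- \<alpha>) ^ (u + d))))
      ((Dminus \<alpha> ^^ u) (mu_z ^ (u + d) * smult (cst (- inverse \<alpha>)) (mu_z * (Dminus \<alpha> ^^ Suc d) f)))"
    by (simp only: Suc.IH Dminus_power_Lambda')
  also have "\<dots> = smult (cst (inverse ((- \<alpha>) ^ (u + d))) * cst (- inverse \<alpha>))
      ((Dminus \<alpha> ^^ u) (mu_z ^ (u + Suc d) * (Dminus \<alpha> ^^ Suc d) f))"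
    by (simp add: Dminus_power_smult mult.assoc mult.left_commute del: mult_pCons_left)
  finally show ?case
    by (simp only: cst_inverse_power_step add_Suc_right)
qed

theorem mainTheorem8:
  fixes \<alpha> :: complex and m u :: nat
  assumes "\<alpha> \<noteq> 0" and "0 < m" and "u \<le> m"
  shows "LamProd \<alpha> (of_nat u) m =
    (\<lambda>f. smult (cst (inverse ((- \<alpha>) ^ m)))
       ((Dminus \<alpha> ^^ u) ([:mu2, - mu1:] ^ m * (Dminus \<alpha> ^^ (m - u)) f)))"
proof
  fix f
  from \<open>u \<le> m\<close> obtain d where "m = u + d"
    using le_Suc_ex by blast
  then show "LamProd \<alpha> (of_nat u) m f = smult (cst (inverse ((- \<alpha>) ^ m)))
      ((Dminus \<alpha> ^^ u) ([:mu2, - mu1:] ^ m * (Dminus \<alpha> ^^ (m - u)) f))"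
    using LamProd_eq_Dminus_power by simp
qed

end
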